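(* Let $A,B$ be non-empty sets, $I$ a non-empty index set, $\{V_i\}_{i\in I}\subseteq\mathcal R(A)$, $\{W_i\}_{i\in I}\subseteq\mathcal R(B)$, ${\cal A}=(A,I,V_i)$, ${\cal B}=(B,I,W_i)$, let $R\in\mathcal R(A,B)$ be a uniform fuzzy relation and $Z\in\mathcal R(A,B)$ with $R\le Z$. Then $R$ is a solution to $WL^{2\text{-}3}(A,B,I,V_i,W_i,Z)$ if and only if all of the following hold: (i) $E_A^R$ is a solution to $WL^{1\text{-}4}(A,I,V_i,Z\circ Z^{-1})$; (ii) $E_B^R$ is a solution to $WL^{1\text{-}4}(B,I,W_i,Z^{-1}\circ Z)$; (iii) $\widetilde R$ is an isomorphism of the quotient fuzzy relational systems ${\cal A}/E_A^R$ and ${\cal B}/E_B^R$.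
   Context: $\mathcal L=(L,\wedge,\vee,\otimes,\to,0,1)$ is a complete residuated lattice; $x\leftrightarrow y=(x\to y)\wedge(y\to x)$. For non-empty sets $X,Y$, $\mathcal R(X,Y)$ is the set of fuzzy relations $X\times Y\to L$, $\mathcal R(X)=\mathcal R(X,X)$, ordered pointwise; $R^{-1}(y,x)=R(x,y)$; $(R\circ S)(x,t)=\bigvee_{y}R(x,y)\otimes S(y,t)$. For $R\in\mathcal R(A,B)$: kernel $E_A^R(a_1,a_2)=\bigwedge_{b\in B}R(a_1,b)\leftrightarrow R(a_2,b)$; co-kernel $E_B^R(b_1,b_2)=\bigwedge_{a\in A}R(a,b_1)\leftrightarrow R(a,b_2)$ (both fuzzy equivalences). $R$ is uniform if every $a$ has some $b$ with $R(a,b)=1$, every $b$ has some $a$ with $R(a,b)=1$, and $R(a,b_1)\otimes R(a,b_2)\le E_B^R(b_1,b_2)$ for all $a,b_1,b_2$. For uniform $R$, with $E=E_A^R$, $F=E_B^R$, the map $\widetilde R:A/E\to B/F$, $\widetilde R(E_a)=F_{\psi(a)}$, where $\psi:A\to B$ is any function with $R(a,\psi(a))=1$ for all $a$, is well defined (independent of choices) and bijective. For a fuzzy equivalence $E$ on $X$ (reflexive, symmetric, $E(x,y)\otimes E(y,z)\le E(x,z)$): $E_x(y)=E(x,y)$, $X/E=\{E_x\}$; the quotient of ${\cal X}=(X,I,V_i)$ is ${\cal X}/E=(X/E,I,V_i^{X/E})$ with $V_i^{X/E}(E_{x_1},E_{x_2})=(E\circ V_i\circ E)(x_1,x_2)$.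 An isomorphism of $(X,I,V_i)$ and $(Y,I,W_i)$ is a bijection $\varphi$ with $V_i(x_1,x_2)=W_i(\varphi(x_1),\varphi(x_2))$ for all $x_1,x_2$, $i$. $WL^{2\text{-}3}(A,B,I,V_i,W_i,Z)$ (unknown $U\in\mathcal R(A,B)$): $U^{-1}\circ V_i\le W_i\circ U^{-1}$ and $U\circ W_i\le V_i\circ U$ for all $i$, and $U\le Z$. $WL^{1\text{-}4}(X,I,V_i,W)$ (unknown $U\in\mathcal R(X)$): $U\circ V_i\le V_i\circ U$ and $U^{-1}\circ V_i\le V_i\circ U^{-1}$ for all $i$, and $U\le W$, $U^{-1}\le W$. *)

theory Defs
  imports Main
begin

definition complete_residuated_lattice ::
  "('l::complete_lattice \<Rightarrow> 'l \<Rightarrow> 'l) \<Rightarrow> ('l \<Rightarrow> 'l \<Rightarrow> 'l) \<Rightarrow> bool" where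
  "complete_residuated_lattice mul res \<longleftrightarrow>
     (\<forall>x y z. mul (mul x y) z = mul x (mul y z)) \<and>
     (\<forall>x y. mul x y = mul y x) \<and>
     (\<forall>x. mul x top = x) \<and>
     (\<forall>x y z. mul x y \<le> z \<longleftrightarrow> x \<le> res y z)"

definition biimp :: "('l::complete_lattice \<Rightarrow> 'l \<Rightarrow> 'l) \<Rightarrow> 'l \<Rightarrow> 'l \<Rightarrow> 'l" where
  "biimp res x y = inf (res x y) (res y x)"

definition rel_comp ::
  "('l::complete_lattice \<Rightarrow> 'l \<Rightarrow> 'l) \<Rightarrow> ('a \<Rightarrow> 'b \<Rightarrow> 'l) \<Rightarrow> ('b \<Rightarrow> 'c \<Rightarrow> 'l) \<Rightarrow> 'a \<Rightarrow> 'c \<Rightarrow> 'l" where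
  "rel_comp mul R S x t = (SUP y. mul (R x y) (S y t))"

definition rel_conv :: "('a \<Rightarrow> 'b \<Rightarrow> 'l) \<Rightarrow> 'b \<Rightarrow> 'a \<Rightarrow> 'l" where
  "rel_conv R y x = R x y"

definition fkernel :: "('l::complete_lattice \<Rightarrow> 'l \<Rightarrow> 'l) \<Rightarrow> ('a \<Rightarrow> 'b \<Rightarrow> 'l) \<Rightarrow> 'a \<Rightarrow> 'a \<Rightarrow> 'l" where
  "fkernel res R a1 a2 = (INF b. biimp res (R a1 b) (R a2 b))"

definition cokernel :: "('l::complete_lattice \<Rightarrow> 'l \<Rightarrow> 'l) \<Rightarrow> ('a \<Rightarrow> 'b \<Rightarrow> 'l) \<Rightarrow> 'b \<Rightarrow> 'b \<Rightarrow> 'l" where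
  "cokernel res R b1 b2 = (INF a. biimp res (R a b1) (R a b2))"

definition uniform_rel ::
  "('l::complete_lattice \<Rightarrow> 'l \<Rightarrow> 'l) \<Rightarrow> ('l \<Rightarrow> 'l \<Rightarrow> 'l) \<Rightarrow> ('a \<Rightarrow> 'b \<Rightarrow> 'l) \<Rightarrow> bool" where
  "uniform_rel mul res R \<longleftrightarrow>
     (\<forall>a. \<exists>b. R a b = top) \<and> (\<forall>b. \<exists>a. R a b = top) \<and>
     (\<forall>a b1 b2. mul (R a b1) (R a b2) \<le> cokernel res R b1 b2)"

text \<open>The map R~ : A/E -> B/F, E_a |-> F_psi(a) with R a (psi a) = 1
  (classes are represented as the functions E_a = E a).\<close>
definition rel_tilde ::
  "('l::complete_lattice \<Rightarrow> 'l \<Rightarrow> 'l) \<Rightarrow> ('a \<Rightarrow> 'b \<Rightarrow> 'l) \<Rightarrow> ('a \<Rightarrow> 'l) \<Rightarrow> ('b \<Rightarrow> 'l)" where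
  "rel_tilde res R C =
     (let a = (SOME a. fkernel res R a = C) in cokernel res R (SOME b. R a b = top))"

definition quot_carrier :: "('a \<Rightarrow> 'a \<Rightarrow> 'l) \<Rightarrow> ('a \<Rightarrow> 'l) set" where
  "quot_carrier E = range E"

definition quot_rel ::
  "('l::complete_lattice \<Rightarrow> 'l \<Rightarrow> 'l) \<Rightarrow> ('a \<Rightarrow> 'a \<Rightarrow> 'l) \<Rightarrow> ('i \<Rightarrow> 'a \<Rightarrow> 'a \<Rightarrow> 'l)
     \<Rightarrow> 'i \<Rightarrow> ('a \<Rightarrow> 'l) \<Rightarrow> ('a \<Rightarrow> 'l) \<Rightarrow> 'l" where
  "quot_rel mul E V i C1 C2 =
     rel_comp mul (rel_comp mul E (V i)) E (SOME x. E x = C1) (SOME x. E x = C2)"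

definition frs_iso ::
  "'x set \<Rightarrow> ('i \<Rightarrow> 'x \<Rightarrow> 'x \<Rightarrow> 'l) \<Rightarrow> 'y set \<Rightarrow> ('i \<Rightarrow> 'y \<Rightarrow> 'y \<Rightarrow> 'l) \<Rightarrow> ('x \<Rightarrow> 'y) \<Rightarrow> bool" where
  "frs_iso X V Y W \<phi> \<longleftrightarrow> bij_betw \<phi> X Y \<and>
     (\<forall>i. \<forall>x1\<in>X. \<forall>x2\<in>X. V i x1 x2 = W i (\<phi> x1) (\<phi> x2))"

definition WL23 ::
  "('l::complete_lattice \<Rightarrow> 'l \<Rightarrow> 'l) \<Rightarrow> ('i \<Rightarrow> 'a \<Rightarrow> 'a \<Rightarrow> 'l) \<Rightarrow> ('i \<Rightarrow> 'b \<Rightarrow> 'b \<Rightarrow> 'l)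
     \<Rightarrow> ('a \<Rightarrow> 'b \<Rightarrow> 'l) \<Rightarrow> ('a \<Rightarrow> 'b \<Rightarrow> 'l) \<Rightarrow> bool" where
  "WL23 mul V W Z U \<longleftrightarrow>
     (\<forall>i. rel_comp mul (rel_conv U) (V i) \<le> rel_comp mul (W i) (rel_conv U)) \<and>
     (\<forall>i. rel_comp mul U (W i) \<le> rel_comp mul (V i) U) \<and> U \<le> Z"

definition WL14 ::
  "('l::complete_lattice \<Rightarrow> 'l \<Rightarrow> 'l) \<Rightarrow> ('i \<Rightarrow> 'a \<Rightarrow> 'a \<Rightarrow> 'l) \<Rightarrow> ('a \<Rightarrow> 'a \<Rightarrow> 'l)
     \<Rightarrow> ('a \<Rightarrow> 'a \<Rightarrow> 'l) \<Rightarrow> bool" where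
  "WL14 mul V W U \<longleftrightarrow>
     (\<forall>i. rel_comp mul U (V i) \<le> rel_comp mul (V i) U) \<and>
     (\<forall>i. rel_comp mul (rel_conv U) (V i) \<le> rel_comp mul (V i) (rel_conv U)) \<and>
     U \<le> W \<and> rel_conv U \<le> W"

end

theory Submission
  imports Defs
begin

text \<open>Uniformity makes R behave like a bijection between the classes of its kernel E and
  its co-kernel F: R \<circ> R\<inverse> = E, R\<inverse> \<circ> R = F, R \<circ> F = R and E \<circ> R = R. Consequently
  the map sending the E-class of a to the F-class of \<psi>(a) is an isomorphism of the quotients
  exactly when E \<circ> V i \<circ> E = R \<circ> W i \<circ> R\<inverse> for all i, and both directions of the
  equivalence become short calculations in the algebra of fuzzy relations.\<close>

locale residuated_lattice =
  fixes mul res :: "'l::complete_lattice \<Rightarrow> 'l \<Rightarrow> 'l"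
  assumes residuated: "complete_residuated_lattice mul res"
begin

abbreviation comp :: "('a \<Rightarrow> 'b \<Rightarrow> 'l) \<Rightarrow> ('b \<Rightarrow> 'c \<Rightarrow> 'l) \<Rightarrow> 'a \<Rightarrow> 'c \<Rightarrow> 'l"
    (infixl "\<cdot>" 75) where
  "R \<cdot> S \<equiv> rel_comp mul R S"

lemma mul_assoc: "mul (mul x y) z = mul x (mul y z)"
  using residuated unfolding complete_residuated_lattice_def by blast

lemma mul_commute: "mul x y = mul y x"
  using residuated unfolding complete_residuated_lattice_def by blast

lemma mul_top_right [simp]: "mul x top = x"
  using residuated unfolding complete_residuated_lattice_def by blast

lemma mul_top_left [simp]: "mul top x = x"
  using mul_top_right mul_commute by metis

lemma residuation: "mul x y \<le> z \<longleftrightarrow> x \<le> res y z"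
  using residuated unfolding complete_residuated_lattice_def by blast

lemma mul_mono_left: "a \<le> b \<Longrightarrow> mul a c \<le> mul b c"
  by (meson residuation order_refl order_trans)

lemma mul_mono: "a \<le> b \<Longrightarrow> c \<le> d \<Longrightarrow> mul a c \<le> mul b d"
  by (metis mul_commute mul_mono_left order_trans)

lemma res_top_left [simp]: "res top z = z"
  by (metis antisym order_refl residuation mul_top_right)

lemma res_self [simp]: "res z z = top"
  using residuation[of top z z] by (simp add: top.extremum_unique)

lemma res_trans: "mul (res p q) (res q r) \<le> res p r"
proof -
  have "mul (mul (res p q) (res q r)) p = mul (res q r) (mul (res p q) p)"
    by (metis mul_assoc mul_commute)
  also have "\<dots> \<le> mul (res q r) q" by (rule mul_mono) (auto simp: residuation)
  also have "\<dots> \<le> r" by (simp add: residuation)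
  finally show ?thesis by (simp add: residuation)
qed

lemma biimp_trans: "mul (biimp res p q) (biimp res q r) \<le> biimp res p r"
  unfolding biimp_def
proof (rule le_infI)
  show "mul (inf (res p q) (res q p)) (inf (res q r) (res r q)) \<le> res p r"
    by (rule order_trans[OF mul_mono[of _ "res p q" _ "res q r"] res_trans]) auto
  show "mul (inf (res p q) (res q p)) (inf (res q r) (res r q)) \<le> res r p"
    by (subst mul_commute, rule order_trans[OF mul_mono[of _ "res r q" _ "res q p"] res_trans])
      auto
qed

lemma mul_SUP_left: "mul (SUP y. f y) c = (SUP y. mul (f y) c)"
proof (rule antisym)
  have "(SUP y. f y) \<le> res c (SUP y. mul (f y) c)"
    by (rule SUP_least) (simp only: residuation[symmetric], rule SUP_upper, simp)
  then show "mul (SUP y. f y) c \<le> (SUP y. mul (f y) c)" by (simp add: residuation)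
  show "(SUP y. mul (f y) c) \<le> mul (SUP y. f y) c"
    by (rule SUP_least) (rule mul_mono_left, rule SUP_upper, simp)
qed

lemma mul_SUP_right: "mul c (SUP y. f y) = (SUP y. mul c (f y))"
  using mul_SUP_left by (simp add: mul_commute)

lemma rel_comp_assoc: "R \<cdot> S \<cdot> T = R \<cdot> (S \<cdot> T)"
proof (intro ext)
  fix x t
  have "(R \<cdot> S \<cdot> T) x t = (SUP z. SUP y. mul (mul (R x y) (S y z)) (T z t))"
    by (simp add: rel_comp_def mul_SUP_left)
  also have "\<dots> = (SUP y. SUP z. mul (R x y) (mul (S y z) (T z t)))"
    by (subst SUP_commute) (simp add: mul_assoc)
  also have "\<dots> = (R \<cdot> (S \<cdot> T)) x t"
    by (simp add: rel_comp_def mul_SUP_right)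
  finally show "(R \<cdot> S \<cdot> T) x t = (R \<cdot> (S \<cdot> T)) x t" .
qed

lemma rel_comp_mono: "R \<le> R' \<Longrightarrow> S \<le> S' \<Longrightarrow> R \<cdot> S \<le> R' \<cdot> S'"
  unfolding le_fun_def rel_comp_def by (auto intro!: SUP_mono' mul_mono)

lemma rel_conv_comp: "rel_conv (R \<cdot> S) = rel_conv S \<cdot> rel_conv R"
  by (intro ext) (simp add: rel_comp_def rel_conv_def mul_commute)

lemma rel_conv_mono: "R \<le> S \<Longrightarrow> rel_conv R \<le> rel_conv S"
  unfolding le_fun_def rel_conv_def by auto

definition fuzzy_equiv :: "('x \<Rightarrow> 'x \<Rightarrow> 'l) \<Rightarrow> bool" where
  "fuzzy_equiv E \<longleftrightarrow> (\<forall>x. E x x = top) \<and> (\<forall>x y. E x y = E y x) \<and>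
     (\<forall>x y z. mul (E x y) (E y z) \<le> E x z)"

lemma fuzzy_equiv_refl: "fuzzy_equiv E \<Longrightarrow> E x x = top"
  by (simp add: fuzzy_equiv_def)

lemma fuzzy_equiv_sym: "fuzzy_equiv E \<Longrightarrow> E x y = E y x"
  unfolding fuzzy_equiv_def by blast

lemma fuzzy_equiv_trans: "fuzzy_equiv E \<Longrightarrow> mul (E x y) (E y z) \<le> E x z"
  unfolding fuzzy_equiv_def by blast

lemma fuzzy_equiv_cokernel: "fuzzy_equiv (cokernel res R)"
  unfolding fuzzy_equiv_def
proof (intro conjI allI)
  fix x y z
  show "cokernel res R x x = top" by (simp add: cokernel_def biimp_def)
  show "cokernel res R x y = cokernel res R y x"
    by (simp add: cokernel_def biimp_def inf_commute)
  show "mul (cokernel res R x y) (cokernel res R y z) \<le> cokernel res R x z"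
    unfolding cokernel_def
    by (rule INF_greatest, rule order_trans[OF mul_mono biimp_trans]) (auto intro: INF_lower)
qed

lemma fkernel_eq_cokernel_conv: "fkernel res R = cokernel res (rel_conv R)"
  by (intro ext) (simp add: fkernel_def cokernel_def rel_conv_def)

lemma fuzzy_equiv_fkernel: "fuzzy_equiv (fkernel res R)"
  by (simp add: fkernel_eq_cokernel_conv fuzzy_equiv_cokernel)

lemma fuzzy_equiv_conv: "fuzzy_equiv E \<Longrightarrow> rel_conv E = E"
  by (intro ext) (simp add: rel_conv_def fuzzy_equiv_sym)

lemma fuzzy_equiv_class_eq:
  assumes "fuzzy_equiv E" "E x y = top"
  shows "E x = E y"
proof
  fix z
  have "E x z \<le> E y z" "E y z \<le> E x z"
    using fuzzy_equiv_trans[OF assms(1), of y x z] fuzzy_equiv_trans[OF assms(1), of x y z]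
      assms fuzzy_equiv_sym[OF assms(1), of x y] by simp_all
  then show "E x z = E y z" by (rule antisym)
qed

lemma fuzzy_equiv_class_eqD: "fuzzy_equiv E \<Longrightarrow> E x = E y \<Longrightarrow> E x y = top"
  by (metis fuzzy_equiv_refl)

lemma fuzzy_equiv_comp_self: assumes "fuzzy_equiv E" shows "E \<cdot> E = E"
proof (intro ext antisym)
  fix x z
  show "(E \<cdot> E) x z \<le> E x z"
    unfolding rel_comp_def by (rule SUP_least) (rule fuzzy_equiv_trans[OF assms])
  show "E x z \<le> (E \<cdot> E) x z"
    unfolding rel_comp_def by (rule SUP_upper2[of z]) (simp_all add: fuzzy_equiv_refl[OF assms])
qed

lemma le_fuzzy_equiv_comp: "fuzzy_equiv E \<Longrightarrow> M \<le> E \<cdot> M"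
  unfolding le_fun_def rel_comp_def
proof (intro allI)
  fix x y assume "fuzzy_equiv E"
  then show "M x y \<le> (SUP z. mul (E x z) (M z y))"
    by (intro SUP_upper2[of x]) (simp_all add: fuzzy_equiv_refl)
qed

lemma le_comp_fuzzy_equiv: "fuzzy_equiv E \<Longrightarrow> M \<le> M \<cdot> E"
  unfolding le_fun_def rel_comp_def
proof (intro allI)
  fix x y assume "fuzzy_equiv E"
  then show "M x y \<le> (SUP z. mul (M x z) (E z y))"
    by (intro SUP_upper2[of y]) (simp_all add: fuzzy_equiv_refl)
qed

lemma fuzzy_equiv_INF_biimp:
  assumes "fuzzy_equiv E"
  shows "(INF b. biimp res (E x b) (E y b)) = E x y"
proof (rule antisym)
  show "(INF b. biimp res (E x b) (E y b)) \<le> E x y"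
    by (rule INF_lower2[of y]) (simp_all add: biimp_def fuzzy_equiv_refl[OF assms] le_infI2)
  have "mul (E x y) (E x b) \<le> E y b" "mul (E x y) (E y b) \<le> E x b" for b
    using fuzzy_equiv_trans[OF assms, of y x b] fuzzy_equiv_trans[OF assms, of x y b]
      fuzzy_equiv_sym[OF assms, of x y] by simp_all
  then show "E x y \<le> (INF b. biimp res (E x b) (E y b))"
    unfolding biimp_def by (auto intro!: INF_greatest simp: residuation)
qed

lemma quot_rel_class:
  assumes "fuzzy_equiv E"
  shows "quot_rel mul E V i (E x1) (E x2) = (E \<cdot> V i \<cdot> E) x1 x2"
proof -
  define c1 c2 where "c1 = (SOME x. E x = E x1)" and "c2 = (SOME x. E x = E x2)"
  have c1: "E c1 = E x1" and c2: "E c2 = E x2" unfolding c1_def c2_def by (rule someI, simp)+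
  have "E z c2 = E z x2" for z
    using fuzzy_equiv_sym[OF assms, of z c2] fuzzy_equiv_sym[OF assms, of z x2] c2 by simp
  then show ?thesis unfolding quot_rel_def c1_def[symmetric] c2_def[symmetric] rel_comp_def c1
    by simp
qed

end

locale uniform_relation = residuated_lattice mul res
  for mul res :: "'l::complete_lattice \<Rightarrow> 'l \<Rightarrow> 'l" +
  fixes R :: "'a \<Rightarrow> 'b \<Rightarrow> 'l"
  assumes uniform: "uniform_rel mul res R"
begin

abbreviation E where "E \<equiv> fkernel res R"
abbreviation F where "F \<equiv> cokernel res R"

definition psi :: "'a \<Rightarrow> 'b" where "psi a = (SOME b. R a b = top)"
definition phi :: "'b \<Rightarrow> 'a" where "phi b = (SOME a. R a b = top)"

lemma R_psi: "R a (psi a) = top"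
  unfolding psi_def by (rule someI_ex) (use uniform in \<open>simp add: uniform_rel_def\<close>)

lemma R_phi: "R (phi b) b = top"
  unfolding phi_def by (rule someI_ex) (use uniform in \<open>simp add: uniform_rel_def\<close>)

lemma mul_R_le_cokernel: "mul (R a b1) (R a b2) \<le> F b1 b2"
  using uniform unfolding uniform_rel_def by blast

lemma cokernel_le_res: "F b1 b2 \<le> res (R a b1) (R a b2)"
  unfolding cokernel_def biimp_def by (rule INF_lower2[of a]) auto

lemma R_eq_cokernel_psi: "R a b = F (psi a) b"
proof (rule antisym)
  show "R a b \<le> F (psi a) b" using mul_R_le_cokernel[of a "psi a" b] by (simp add: R_psi)
  show "F (psi a) b \<le> R a b" using cokernel_le_res[of "psi a" b a] by (simp add: R_psi)
qed

lemma fkernel_eq_cokernel_psi: "E a1 a2 = F (psi a1) (psi a2)"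
proof -
  have "E a1 a2 = (INF b. biimp res (F (psi a1) b) (F (psi a2) b))"
    unfolding fkernel_def by (simp add: R_eq_cokernel_psi[symmetric])
  then show ?thesis by (simp add: fuzzy_equiv_INF_biimp[OF fuzzy_equiv_cokernel])
qed

lemma R_eq_cokernel_psi': "R a b = F b (psi a)"
  by (simp add: R_eq_cokernel_psi fuzzy_equiv_sym[OF fuzzy_equiv_cokernel, where x = b])

lemma cokernel_psi_phi: "F (psi (phi b)) = F b"
  by (rule fuzzy_equiv_class_eq[OF fuzzy_equiv_cokernel])
    (simp add: R_eq_cokernel_psi[symmetric] R_phi)

lemma comp_conv_eq_fkernel: "R \<cdot> rel_conv R = E"
proof (intro ext)
  fix a1 a2
  have "(R \<cdot> rel_conv R) a1 a2 = (F \<cdot> F) (psi a1) (psi a2)"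
    unfolding rel_comp_def rel_conv_def R_eq_cokernel_psi[of a1] R_eq_cokernel_psi'[of a2] ..
  then show "(R \<cdot> rel_conv R) a1 a2 = E a1 a2"
    by (simp add: fuzzy_equiv_comp_self[OF fuzzy_equiv_cokernel] fkernel_eq_cokernel_psi)
qed

lemma conv_comp_eq_cokernel: "rel_conv R \<cdot> R = F"
proof (intro ext antisym)
  fix b1 b2
  show "(rel_conv R \<cdot> R) b1 b2 \<le> F b1 b2"
    unfolding rel_comp_def rel_conv_def by (rule SUP_least) (rule mul_R_le_cokernel)
  have "F b1 b2 \<le> R (phi b1) b2" using cokernel_le_res[of b1 b2 "phi b1"] by (simp add: R_phi)
  also have "\<dots> = mul (rel_conv R b1 (phi b1)) (R (phi b1) b2)" by (simp add: rel_conv_def R_phi)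
  also have "\<dots> \<le> (rel_conv R \<cdot> R) b1 b2" unfolding rel_comp_def by (rule SUP_upper) simp
  finally show "F b1 b2 \<le> (rel_conv R \<cdot> R) b1 b2" .
qed

lemma comp_cokernel: "R \<cdot> F = R"
proof (intro ext)
  fix a b
  have "(R \<cdot> F) a b = (F \<cdot> F) (psi a) b" unfolding rel_comp_def R_eq_cokernel_psi[of a] ..
  then show "(R \<cdot> F) a b = R a b"
    by (simp add: fuzzy_equiv_comp_self[OF fuzzy_equiv_cokernel] R_eq_cokernel_psi[of a])
qed

lemma fkernel_comp: "E \<cdot> R = R"
  using comp_cokernel
  by (simp only: comp_conv_eq_fkernel[symmetric] rel_comp_assoc conv_comp_eq_cokernel)

lemma cokernel_comp_conv: "F \<cdot> rel_conv R = rel_conv R"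
  using arg_cong[OF comp_cokernel, of rel_conv]
  by (simp only: rel_conv_comp fuzzy_equiv_conv[OF fuzzy_equiv_cokernel])

lemma conv_comp_fkernel: "rel_conv R \<cdot> E = rel_conv R"
  using arg_cong[OF fkernel_comp, of rel_conv]
  by (simp only: rel_conv_comp fuzzy_equiv_conv[OF fuzzy_equiv_fkernel])

lemma rel_tilde_class: "rel_tilde res R (E a) = F (psi a)"
proof -
  define a' where "a' = (SOME a'. E a' = E a)"
  have "E a' = E a" unfolding a'_def by (rule someI) simp
  then have "F (psi a') (psi a) = top"
    by (metis fuzzy_equiv_class_eqD fuzzy_equiv_fkernel fkernel_eq_cokernel_psi)
  then have "F (psi a') = F (psi a)" by (rule fuzzy_equiv_class_eq[OF fuzzy_equiv_cokernel])
  then show ?thesis unfolding rel_tilde_def a'_def psi_def by simp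
qed

lemma bij_betw_rel_tilde:
  "bij_betw (rel_tilde res R) (quot_carrier E) (quot_carrier F)"
proof -
  have "inj_on (rel_tilde res R) (range E)"
  proof (rule inj_onI)
    fix x y assume "x \<in> range E" "y \<in> range E" "rel_tilde res R x = rel_tilde res R y"
    then obtain a1 a2 where x: "x = E a1" and y: "y = E a2" and "F (psi a1) = F (psi a2)"
      by (auto simp: rel_tilde_class)
    then have "E a1 a2 = top"
      by (simp add: fkernel_eq_cokernel_psi fuzzy_equiv_class_eqD[OF fuzzy_equiv_cokernel])
    then show "x = y" unfolding x y by (rule fuzzy_equiv_class_eq[OF fuzzy_equiv_fkernel])
  qed
  moreover have "rel_tilde res R ` range E = range F"
  proof
    show "rel_tilde res R ` range E \<subseteq> range F" by (auto simp: rel_tilde_class)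
    have "F b = rel_tilde res R (E (phi b))" for b by (simp add: rel_tilde_class cokernel_psi_phi)
    then show "range F \<subseteq> rel_tilde res R ` range E" by blast
  qed
  ultimately show ?thesis unfolding bij_betw_def quot_carrier_def ..
qed

lemma frs_iso_rel_tilde_iff:
  "frs_iso (quot_carrier E) (quot_rel mul E V) (quot_carrier F) (quot_rel mul F W)
     (rel_tilde res R) \<longleftrightarrow> (\<forall>i. E \<cdot> V i \<cdot> E = R \<cdot> W i \<cdot> rel_conv R)"
proof -
  have RWR: "(R \<cdot> W i \<cdot> rel_conv R) a1 a2 = (F \<cdot> W i \<cdot> F) (psi a1) (psi a2)" for i a1 a2
    unfolding rel_comp_def rel_conv_def R_eq_cokernel_psi[of a1] R_eq_cokernel_psi'[of a2] ..
  show ?thesis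
    unfolding frs_iso_def using bij_betw_rel_tilde
    by (auto simp: fun_eq_iff quot_carrier_def rel_tilde_class RWR
        quot_rel_class[OF fuzzy_equiv_fkernel] quot_rel_class[OF fuzzy_equiv_cokernel])
qed

lemma fkernel_le_comp_conv: "R \<le> Z \<Longrightarrow> E \<le> Z \<cdot> rel_conv Z"
  unfolding comp_conv_eq_fkernel[symmetric] by (intro rel_comp_mono rel_conv_mono)

lemma cokernel_le_conv_comp: "R \<le> Z \<Longrightarrow> F \<le> rel_conv Z \<cdot> Z"
  unfolding conv_comp_eq_cokernel[symmetric] by (intro rel_comp_mono rel_conv_mono)

context
  fixes V :: "'a \<Rightarrow> 'a \<Rightarrow> 'l" and W :: "'b \<Rightarrow> 'b \<Rightarrow> 'l"
begin

lemma fkernel_comp_le_comp_fkernel: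
  assumes "rel_conv R \<cdot> V \<le> W \<cdot> rel_conv R" and "R \<cdot> W \<le> V \<cdot> R"
  shows "E \<cdot> V \<le> V \<cdot> E"
proof -
  have "E \<cdot> V = R \<cdot> (rel_conv R \<cdot> V)"
    by (simp only: rel_comp_assoc[symmetric] comp_conv_eq_fkernel)
  also have "\<dots> \<le> R \<cdot> W \<cdot> rel_conv R"
    using rel_comp_mono[OF order_refl assms(1), of R] by (simp only: rel_comp_assoc)
  also have "\<dots> \<le> V \<cdot> R \<cdot> rel_conv R" by (rule rel_comp_mono[OF assms(2) order_refl])
  also have "\<dots> = V \<cdot> E" by (simp only: rel_comp_assoc comp_conv_eq_fkernel)
  finally show ?thesis .
qed

lemma cokernel_comp_le_comp_cokernel:
  assumes "rel_conv R \<cdot> V \<le> W \<cdot> rel_conv R" and "R \<cdot> W \<le> V \<cdot> R"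
  shows "F \<cdot> W \<le> W \<cdot> F"
proof -
  have "F \<cdot> W = rel_conv R \<cdot> (R \<cdot> W)"
    by (simp only: rel_comp_assoc[symmetric] conv_comp_eq_cokernel)
  also have "\<dots> \<le> rel_conv R \<cdot> V \<cdot> R"
    using rel_comp_mono[OF order_refl assms(2), of "rel_conv R"] by (simp only: rel_comp_assoc)
  also have "\<dots> \<le> W \<cdot> rel_conv R \<cdot> R" by (rule rel_comp_mono[OF assms(1) order_refl])
  also have "\<dots> = W \<cdot> F" by (simp only: rel_comp_assoc conv_comp_eq_cokernel)
  finally show ?thesis .
qed

lemma fkernel_comp_comp_fkernel_eq:
  assumes "rel_conv R \<cdot> V \<le> W \<cdot> rel_conv R" and "R \<cdot> W \<le> V \<cdot> R"
  shows "E \<cdot> V \<cdot> E = R \<cdot> W \<cdot> rel_conv R"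
proof (rule antisym)
  have "E \<cdot> V \<cdot> E = R \<cdot> (rel_conv R \<cdot> V) \<cdot> E"
    by (simp only: rel_comp_assoc[symmetric] comp_conv_eq_fkernel)
  also have "\<dots> \<le> R \<cdot> (W \<cdot> rel_conv R) \<cdot> E"
    by (rule rel_comp_mono[OF rel_comp_mono[OF order_refl assms(1)] order_refl])
  also have "\<dots> = R \<cdot> W \<cdot> rel_conv R" by (simp only: rel_comp_assoc conv_comp_fkernel)
  finally show "E \<cdot> V \<cdot> E \<le> R \<cdot> W \<cdot> rel_conv R" .
  have "R \<cdot> W \<cdot> rel_conv R \<le> V \<cdot> R \<cdot> rel_conv R"
    by (rule rel_comp_mono[OF assms(2) order_refl])
  also have "\<dots> = V \<cdot> E" by (simp only: rel_comp_assoc comp_conv_eq_fkernel)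
  also have "\<dots> \<le> E \<cdot> V \<cdot> E"
    using le_fuzzy_equiv_comp[OF fuzzy_equiv_fkernel, of "V \<cdot> E"] by (simp only: rel_comp_assoc)
  finally show "R \<cdot> W \<cdot> rel_conv R \<le> E \<cdot> V \<cdot> E" .
qed

lemma conv_comp_le_comp_conv_if_cokernel_commutes:
  assumes "F \<cdot> W \<le> W \<cdot> F" and "E \<cdot> V \<cdot> E = R \<cdot> W \<cdot> rel_conv R"
  shows "rel_conv R \<cdot> V \<le> W \<cdot> rel_conv R"
proof -
  have "rel_conv R \<cdot> V = rel_conv R \<cdot> (E \<cdot> V)"
    by (simp only: rel_comp_assoc[symmetric] conv_comp_fkernel)
  also have "\<dots> \<le> rel_conv R \<cdot> (E \<cdot> V \<cdot> E)"
    by (rule rel_comp_mono[OF order_refl le_comp_fuzzy_equiv[OF fuzzy_equiv_fkernel]])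
  also have "\<dots> = F \<cdot> W \<cdot> rel_conv R"
    unfolding assms(2) by (simp only: rel_comp_assoc[symmetric] conv_comp_eq_cokernel)
  also have "\<dots> \<le> W \<cdot> F \<cdot> rel_conv R" by (rule rel_comp_mono[OF assms(1) order_refl])
  also have "\<dots> = W \<cdot> rel_conv R" by (simp only: rel_comp_assoc cokernel_comp_conv)
  finally show ?thesis .
qed

lemma comp_le_comp_if_fkernel_commutes:
  assumes "E \<cdot> V \<le> V \<cdot> E" and "E \<cdot> V \<cdot> E = R \<cdot> W \<cdot> rel_conv R"
  shows "R \<cdot> W \<le> V \<cdot> R"
proof -
  have "R \<cdot> W \<le> R \<cdot> W \<cdot> F" by (rule le_comp_fuzzy_equiv[OF fuzzy_equiv_cokernel])
  also have "\<dots> = E \<cdot> V \<cdot> E \<cdot> R"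
    unfolding assms(2) by (simp only: rel_comp_assoc conv_comp_eq_cokernel)
  also have "\<dots> = E \<cdot> V \<cdot> R" by (simp only: rel_comp_assoc fkernel_comp)
  also have "\<dots> \<le> V \<cdot> E \<cdot> R" by (rule rel_comp_mono[OF assms(1) order_refl])
  also have "\<dots> = V \<cdot> R" by (simp only: rel_comp_assoc fkernel_comp)
  finally show ?thesis .
qed

end

end

theorem theorem7p2:
  fixes mul res :: "'l::complete_lattice \<Rightarrow> 'l \<Rightarrow> 'l"
    and V :: "'i \<Rightarrow> 'a \<Rightarrow> 'a \<Rightarrow> 'l" and W :: "'i \<Rightarrow> 'b \<Rightarrow> 'b \<Rightarrow> 'l"
    and R Z :: "'a \<Rightarrow> 'b \<Rightarrow> 'l"
  assumes "complete_residuated_lattice mul res"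
    and "uniform_rel mul res R"
    and "R \<le> Z"
  shows "WL23 mul V W Z R \<longleftrightarrow>
     (WL14 mul V (rel_comp mul Z (rel_conv Z)) (fkernel res R) \<and>
      WL14 mul W (rel_comp mul (rel_conv Z) Z) (cokernel res R) \<and>
      frs_iso (quot_carrier (fkernel res R)) (quot_rel mul (fkernel res R) V)
              (quot_carrier (cokernel res R)) (quot_rel mul (cokernel res R) W)
              (rel_tilde res R))"
proof -
  interpret uniform_relation mul res R by unfold_locales (fact assms(1), fact assms(2))
  have kernels_bounded: "E \<le> Z \<cdot> rel_conv Z" "F \<le> rel_conv Z \<cdot> Z"
    using assms(3) by (rule fkernel_le_comp_conv, rule cokernel_le_conv_comp)
  show ?thesis
    unfolding WL23_def WL14_def frs_iso_rel_tilde_iff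
      fuzzy_equiv_conv[OF fuzzy_equiv_fkernel] fuzzy_equiv_conv[OF fuzzy_equiv_cokernel]
    using assms(3) kernels_bounded fkernel_comp_le_comp_fkernel cokernel_comp_le_comp_cokernel
      fkernel_comp_comp_fkernel_eq conv_comp_le_comp_conv_if_cokernel_commutes
      comp_le_comp_if_fkernel_commutes
    by meson
qed

end
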